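(* Let $d\in\mathbb N$, $\varepsilon\in(0,1)$, and consider Thiémard's decomposition process of $[0,1)^d$ described in the context. Let $P$ be a box generated in the process that is decomposed via DECOMPOSE$(P,j)$ for some type $j\in\{1,\dots,d\}$, and assume $\delta^P W(P)>\varepsilon$. Then for every $i\in\{j,\dots,d\}$ the child $Q^P_i$ (of type $i$) is itself decomposed, and $$\delta^{Q_i^P}=\left(\frac{W(P)-\varepsilon/\delta^P}{W(P)-\varepsilon}\right)^{\frac{1}{d-i+1}}\delta^P .$$ Moreover, the right-hand side, viewed as the function $g(\delta,w,i)=\big(\frac{w-\varepsilon/\delta}{w-\varepsilon}\big)^{1/(d-i+1)}\delta$ on the domain $\delta\in(0,1)$, $w>\varepsilon/\delta$, $i\in\{1,\dots,d\}$, is strictly increasing in $\delta$, strictly increasing in $w$, and strictly decreasing in $i$.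
   Context: Fix $d\in\mathbb N$ and $\varepsilon\in(0,1]$. For $x,y\in[0,1]^d$ write $[x,y)=\prod_{i=1}^d[x_i,y_i)$ and define the weight $W([x,y))=\prod_{i=1}^d y_i-\prod_{i=1}^d x_i$. Thiémard's decomposition process generates boxes, each with a type in $\{1,\dots,d+1\}$. It starts with $I^d=[0,1)^d=[(0,\dots,0),(1,\dots,1))$, of type $1$. Whenever a generated box $P=[\alpha,\beta)$ has type $j\le d$ and $W(P)>\varepsilon$, it is decomposed (procedure DECOMPOSE$(P,j)$) as follows: put $$\delta^P=\left(\frac{\prod_{i=1}^d\beta_i-\varepsilon}{\prod_{i=1}^{j-1}\alpha_i\prod_{i=j}^d\beta_i}\right)^{1/(d-j+1)},\qquad \gamma^P_i=\alpha_i\ (i<j),\quad \gamma^P_i=\delta^P\beta_i\ (i\ge j).$$ The children of $P$ are the boxes $Q^P_k=[a^{(k)},b^{(k)})$ for $k=j,\dots,d$, where $a^{(k)}_i=\gamma^P_i$ for $i<k$, $a^{(k)}_i=\alpha_i$ for $i\ge k$, $b^{(k)}_k=\gamma^P_k$, $b^{(k)}_i=\beta_i$ for $i\neq k$; the box $Q^P_k$ has type $k$. In addition $P$ has the child $Q^P_{d+1}=[\gamma^P,\beta)$ of type $d+1$. A generated box of type $d+1$ or of weight at most $\varepsilon$ is not decomposed. (Known facts from Thiémard: $\delta^P\in(0,1)$; the process terminates after finitely many steps; $W(Q^P_{d+1})=\varepsilon$ and $W(Q^P_k)=\delta^PW(P)$ for $j\le k\le d$.) *)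

theory Defs
  imports Complex_Main
begin

text \<open>Boxes [x,y) in [0,1)^d are represented by pairs of coordinate functions
  x y :: nat => real, of which only the coordinates 1..d are relevant.
  A generated box carries its type, so it is a triple (alpha, beta, j).\<close>

type_synonym tbox = "(nat \<Rightarrow> real) \<times> (nat \<Rightarrow> real) \<times> nat"

definition W :: "nat \<Rightarrow> (nat \<Rightarrow> real) \<Rightarrow> (nat \<Rightarrow> real) \<Rightarrow> real" where
  "W d x y = (\<Prod>i=1..d. y i) - (\<Prod>i=1..d. x i)"

definition tdelta :: "nat \<Rightarrow> real \<Rightarrow> tbox \<Rightarrow> real" where
  "tdelta d eps P = (case P of (\<alpha>, \<beta>, j) \<Rightarrow>
     (((\<Prod>i=1..d. \<beta> i) - eps) / ((\<Prod>i=1..<j. \<alpha> i) * (\<Prod>i=j..d. \<beta> i)))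
       powr (1 / real (d - j + 1)))"

definition tgamma :: "nat \<Rightarrow> real \<Rightarrow> tbox \<Rightarrow> nat \<Rightarrow> real" where
  "tgamma d eps P = (case P of (\<alpha>, \<beta>, j) \<Rightarrow>
     (\<lambda>i. if i < j then \<alpha> i else tdelta d eps P * \<beta> i))"

definition tchild :: "nat \<Rightarrow> real \<Rightarrow> tbox \<Rightarrow> nat \<Rightarrow> tbox" where
  "tchild d eps P k = (case P of (\<alpha>, \<beta>, j) \<Rightarrow>
     (if k = d + 1 then (tgamma d eps P, \<beta>, d + 1)
      else ((\<lambda>i. if i < k then tgamma d eps P i else \<alpha> i),
            (\<lambda>i. if i = k then tgamma d eps P k else \<beta> i), k)))"

definition decomposed :: "nat \<Rightarrow> real \<Rightarrow> tbox \<Rightarrow> bool" where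
  "decomposed d eps P = (case P of (\<alpha>, \<beta>, j) \<Rightarrow> j \<le> d \<and> W d \<alpha> \<beta> > eps)"

inductive_set generated :: "nat \<Rightarrow> real \<Rightarrow> tbox set" for d eps where
  start: "((\<lambda>_. 0), (\<lambda>_. 1), 1) \<in> generated d eps"
| step: "P \<in> generated d eps \<Longrightarrow> decomposed d eps P \<Longrightarrow> P = (\<alpha>, \<beta>, j) \<Longrightarrow>
         j \<le> k \<Longrightarrow> k \<le> d + 1 \<Longrightarrow> tchild d eps P k \<in> generated d eps"

definition tg :: "nat \<Rightarrow> real \<Rightarrow> real \<Rightarrow> real \<Rightarrow> nat \<Rightarrow> real" where
  "tg d eps \<delta> w i = ((w - eps / \<delta>) / (w - eps)) powr (1 / real (d - i + 1)) * \<delta>"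

end

theory Submission
  imports Defs
begin

text \<open>For a decomposed box P = [alpha, beta) of type j, the lower corner of every generated
  box vanishes from coordinate j on, so W(P) is the product of the beta_i and delta = delta^P is
  characterised by delta^(d-j+1) * D = W(P) - eps, where D is the product of the alpha_i (i < j)
  and the beta_i (i >= j). The child Q_i has upper product delta * W(P), and its denominator is
  delta^(i-j+1) * D; hence (delta^Q)^(d-i+1) = (delta W(P) - eps) delta^(d-i) / (W(P) - eps).
  The monotonicity claims hold because the base (w - eps/delta)/(w - eps), which equals
  1 - (eps/delta - eps)/(w - eps), lies in (0,1) and increases with delta and with w.\<close>

lemma tg_base_bounds:
  fixes eps \<delta> w :: real
  assumes "0 < eps" "0 < \<delta>" "\<delta> < 1" "eps / \<delta> < w"
  shows "0 < (w - eps / \<delta>) / (w - eps)" "(w - eps / \<delta>) / (w - eps) < 1"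
proof -
  have "eps < eps / \<delta>" using assms by (simp add: less_divide_eq)
  then show "0 < (w - eps / \<delta>) / (w - eps)" "(w - eps / \<delta>) / (w - eps) < 1"
    using assms(4) by simp_all
qed

lemma tg_strict_mono_delta:
  assumes "0 < eps" "0 < \<delta>1" "\<delta>1 < \<delta>2" "\<delta>1 < 1" "eps / \<delta>1 < w"
  shows "tg d eps \<delta>1 w i < tg d eps \<delta>2 w i"
proof -
  have base_pos: "0 < (w - eps / \<delta>1) / (w - eps)"
    using tg_base_bounds(1)[OF assms(1,2,4,5)] .
  have "eps < eps / \<delta>1" using assms by (simp add: less_divide_eq)
  then have "eps < w" using assms(5) by simp
  have "eps / \<delta>2 < eps / \<delta>1"
    using assms by (simp add: divide_strict_left_mono)
  then have "(w - eps / \<delta>1) / (w - eps) < (w - eps / \<delta>2) / (w - eps)"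
    using \<open>eps < w\<close> by (simp add: divide_strict_right_mono)
  then have "((w - eps / \<delta>1) / (w - eps)) powr (1 / real (d - i + 1))
      < ((w - eps / \<delta>2) / (w - eps)) powr (1 / real (d - i + 1))"
    using base_pos by (intro powr_less_mono2) auto
  then show ?thesis
    unfolding tg_def using base_pos assms by (intro mult_strict_mono) auto
qed

lemma tg_strict_mono_weight:
  assumes "0 < eps" "0 < \<delta>" "\<delta> < 1" "eps / \<delta> < w1" "w1 < w2"
  shows "tg d eps \<delta> w1 i < tg d eps \<delta> w2 i"
proof -
  have "eps < eps / \<delta>" using assms by (simp add: less_divide_eq)
  then have "eps < w1" "eps < w2" using assms by auto
  have base: "(w - eps / \<delta>) / (w - eps) = 1 - (eps / \<delta> - eps) / (w - eps)" if "eps < w" for w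
    using that by (simp add: field_simps)
  have "(eps / \<delta> - eps) / (w2 - eps) < (eps / \<delta> - eps) / (w1 - eps)"
    using \<open>eps < eps / \<delta>\<close> \<open>eps < w1\<close> assms(5) by (intro divide_strict_left_mono) auto
  then have "(w1 - eps / \<delta>) / (w1 - eps) < (w2 - eps / \<delta>) / (w2 - eps)"
    using base \<open>eps < w1\<close> \<open>eps < w2\<close> by simp
  then show ?thesis
    unfolding tg_def using tg_base_bounds(1)[OF assms(1-4)] assms(2)
    by (simp add: powr_less_mono2)
qed

lemma tg_strict_antimono_index:
  assumes "0 < eps" "0 < \<delta>" "\<delta> < 1" "eps / \<delta> < w" "i1 < i2" "i2 \<le> d"
  shows "tg d eps \<delta> w i2 < tg d eps \<delta> w i1"
proof -
  have "1 / real (d - i1 + 1) < 1 / real (d - i2 + 1)"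
    using assms(5,6) by (simp add: frac_less2)
  then show ?thesis
    unfolding tg_def using tg_base_bounds[OF assms(1-4)] assms(2)
    by (simp add: powr_less_mono')
qed

lemma powr_inverse_power:
  fixes x :: real
  assumes "0 < x" "0 < m"
  shows "(x powr (1 / real m)) ^ m = x"
  using assms by (simp add: powr_realpow[symmetric] powr_powr)

text \<open>The algebraic heart of the formula for \<delta>^Q: here D is the denominator of the child
  and w the weight of the parent.\<close>
lemma tg_as_root:
  fixes \<delta> w e D :: real
  assumes "0 < \<delta>" "e < w" "e < \<delta> * w" "D * \<delta> ^ (d - i) = w - e"
  shows "((\<delta> * w - e) / D) powr (1 / real (d - i + 1)) = tg d e \<delta> w i"
proof -
  let ?m = "d - i + 1"
  have "(\<delta> * w - e) / D = (\<delta> * w - e) * \<delta> ^ (d - i) / (D * \<delta> ^ (d - i))"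
    using assms(1) by simp
  also have "\<dots> = (\<delta> * w - e) * \<delta> ^ (d - i) / (w - e)"
    using assms(4) by simp
  also have "\<dots> = ((w - e / \<delta>) / (w - e)) * \<delta> ^ ?m"
    using assms(1,2) by (simp add: field_simps)
  finally have "((\<delta> * w - e) / D) powr (1 / real ?m)
      = ((w - e / \<delta>) / (w - e)) powr (1 / real ?m) * (\<delta> ^ ?m) powr (1 / real ?m)"
    by (simp only: powr_mult)
  also have "(\<delta> ^ ?m) powr (1 / real ?m) = \<delta> powr (real ?m * (1 / real ?m))"
    by (simp only: powr_realpow[OF assms(1), symmetric] powr_powr)
  also have "\<dots> = \<delta>"
    using assms(1) by simp
  finally show ?thesis by (simp add: tg_def)
qed

lemma prod_scale_at:
  fixes f :: "'a \<Rightarrow> 'b::comm_monoid_mult"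
  assumes "finite S" "i \<in> S"
  shows "(\<Prod>l\<in>S. if l = i then c * f l else f l) = c * prod f S"
proof -
  have "(\<Prod>l\<in>S. if l = i then c * f l else f l)
      = c * f i * (\<Prod>l\<in>S - {i}. if l = i then c * f l else f l)"
    using assms by (simp add: prod.remove)
  also have "(\<Prod>l\<in>S - {i}. if l = i then c * f l else f l) = (\<Prod>l\<in>S - {i}. f l)"
    by (rule prod.cong) auto
  also have "c * f i * (\<Prod>l\<in>S - {i}. f l) = c * prod f S"
    by (simp add: prod.remove[OF assms] mult.assoc)
  finally show ?thesis .
qed

definition admissible_box :: "nat \<Rightarrow> tbox \<Rightarrow> bool" where
  "admissible_box d P = (case P of (\<alpha>, \<beta>, j) \<Rightarrow> 1 \<le> j \<and> j \<le> d + 1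
     \<and> (\<forall>i\<in>{1..d}. 0 < \<beta> i) \<and> (\<forall>i\<in>{1..d}. i < j \<longrightarrow> 0 < \<alpha> i)
     \<and> (\<forall>i\<in>{1..d}. j \<le> i \<longrightarrow> \<alpha> i = 0))"

lemma W_admissible_box:
  assumes "admissible_box d (\<alpha>, \<beta>, j)" "j \<le> d"
  shows "W d \<alpha> \<beta> = (\<Prod>i=1..d. \<beta> i)"
proof -
  have "(\<Prod>i=1..d. \<alpha> i) = 0"
    using assms by (intro prod_zero) (auto simp: admissible_box_def intro!: bexI[of _ j])
  then show ?thesis by (simp add: W_def)
qed

lemma tdelta_denominator_pos:
  assumes "admissible_box d (\<alpha>, \<beta>, j)"
  shows "0 < (\<Prod>i=1..<j. \<alpha> i) * (\<Prod>i=j..d. \<beta> i)"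
  using assms by (auto simp: admissible_box_def intro!: prod_pos mult_pos_pos)

lemma tdelta_pos_power:
  assumes "admissible_box d (\<alpha>, \<beta>, j)" "decomposed d eps (\<alpha>, \<beta>, j)"
  shows "0 < tdelta d eps (\<alpha>, \<beta>, j)"
    and "tdelta d eps (\<alpha>, \<beta>, j) ^ (d - j + 1) * ((\<Prod>i=1..<j. \<alpha> i) * (\<Prod>i=j..d. \<beta> i))
           = W d \<alpha> \<beta> - eps"
proof -
  let ?D = "(\<Prod>i=1..<j. \<alpha> i) * (\<Prod>i=j..d. \<beta> i)"
  have "j \<le> d" "eps < W d \<alpha> \<beta>" using assms(2) by (auto simp: decomposed_def)
  then have W: "W d \<alpha> \<beta> = (\<Prod>i=1..d. \<beta> i)" using W_admissible_box[OF assms(1)] by simp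
  have pos: "0 < (W d \<alpha> \<beta> - eps) / ?D"
    using \<open>eps < W d \<alpha> \<beta>\<close> tdelta_denominator_pos[OF assms(1)] by simp
  have \<delta>: "tdelta d eps (\<alpha>, \<beta>, j) = ((W d \<alpha> \<beta> - eps) / ?D) powr (1 / real (d - j + 1))"
    by (simp add: tdelta_def W)
  show "0 < tdelta d eps (\<alpha>, \<beta>, j)"
    using pos unfolding \<delta> powr_gt_zero by linarith
  have "tdelta d eps (\<alpha>, \<beta>, j) ^ (d - j + 1) = (W d \<alpha> \<beta> - eps) / ?D"
    unfolding \<delta> by (rule powr_inverse_power[OF pos]) simp
  moreover have "?D \<noteq> 0"
    using tdelta_denominator_pos[OF assms(1)] by linarith
  ultimately show "tdelta d eps (\<alpha>, \<beta>, j) ^ (d - j + 1) * ?D = W d \<alpha> \<beta> - eps"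
    by (metis nonzero_eq_divide_eq)
qed

lemma generated_admissible_box:
  assumes "P \<in> generated d eps"
  shows "admissible_box d P"
  using assms
proof (induction rule: generated.induct)
  case start
  then show ?case by (auto simp: admissible_box_def)
next
  case (step P \<alpha> \<beta> j k)
  then have "admissible_box d (\<alpha>, \<beta>, j)" "0 < tdelta d eps (\<alpha>, \<beta>, j)"
    using tdelta_pos_power(1) by auto
  then show ?case
    using step by (auto simp: admissible_box_def tchild_def tgamma_def)
qed

lemma tchild_upper_prod:
  assumes "admissible_box d (\<alpha>, \<beta>, j)" "j \<le> i" "i \<le> d"
    and "tchild d eps (\<alpha>, \<beta>, j) i = (a, b, k)"
  shows "(\<Prod>l=1..d. b l) = tdelta d eps (\<alpha>, \<beta>, j) * W d \<alpha> \<beta>"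
proof -
  have "1 \<le> j" using assms(1) by (simp add: admissible_box_def)
  have "b = (\<lambda>l. if l = i then tdelta d eps (\<alpha>, \<beta>, j) * \<beta> l else \<beta> l)"
    using assms(2-4) by (auto simp: tchild_def tgamma_def)
  then have "(\<Prod>l=1..d. b l) = tdelta d eps (\<alpha>, \<beta>, j) * (\<Prod>l=1..d. \<beta> l)"
    using assms(2,3) \<open>1 \<le> j\<close> by (simp add: prod_scale_at)
  then show ?thesis
    using W_admissible_box[OF assms(1)] assms(2,3) by simp
qed

lemma tchild_denominator:
  assumes "admissible_box d (\<alpha>, \<beta>, j)" "j \<le> i" "i \<le> d"
    and "tchild d eps (\<alpha>, \<beta>, j) i = (a, b, k)"
  shows "(\<Prod>l=1..<i. a l) * (\<Prod>l=i..d. b l)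
    = tdelta d eps (\<alpha>, \<beta>, j) ^ (i - j + 1) * ((\<Prod>l=1..<j. \<alpha> l) * (\<Prod>l=j..d. \<beta> l))"
proof -
  define \<delta> where "\<delta> = tdelta d eps (\<alpha>, \<beta>, j)"
  have j: "1 \<le> j" using assms(1) by (simp add: admissible_box_def)
  have a: "a = (\<lambda>l. if l < i then (if l < j then \<alpha> l else \<delta> * \<beta> l) else \<alpha> l)"
    and b: "b = (\<lambda>l. if l = i then \<delta> * \<beta> l else \<beta> l)"
    using assms(2-4) by (auto simp: tchild_def tgamma_def \<delta>_def)
  have "(\<Prod>l=1..<i. a l) = (\<Prod>l=1..<j. a l) * (\<Prod>l=j..<i. a l)"
    using j assms(2) by (simp add: prod.atLeastLessThan_concat)
  also have "(\<Prod>l=1..<j. a l) = (\<Prod>l=1..<j. \<alpha> l)"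
    using assms(2) by (intro prod.cong) (auto simp: a)
  also have "(\<Prod>l=j..<i. a l) = (\<Prod>l=j..<i. \<delta> * \<beta> l)"
    by (intro prod.cong) (auto simp: a)
  also have "\<dots> = \<delta> ^ (i - j) * (\<Prod>l=j..<i. \<beta> l)"
    by (simp add: prod.distrib)
  finally have lower: "(\<Prod>l=1..<i. a l) = (\<Prod>l=1..<j. \<alpha> l) * \<delta> ^ (i - j) * (\<Prod>l=j..<i. \<beta> l)"
    by simp
  have upper: "(\<Prod>l=i..d. b l) = \<delta> * (\<Prod>l=i..d. \<beta> l)"
    unfolding b using assms(3) by (intro prod_scale_at) auto
  have "(\<Prod>l=j..<i. \<beta> l) * (\<Prod>l=i..<Suc d. \<beta> l) = (\<Prod>l=j..<Suc d. \<beta> l)"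
    using assms(2,3) by (simp add: prod.atLeastLessThan_concat)
  then have "(\<Prod>l=j..<i. \<beta> l) * (\<Prod>l=i..d. \<beta> l) = (\<Prod>l=j..d. \<beta> l)"
    by (simp add: atLeastLessThanSuc_atLeastAtMost)
  then show ?thesis
    unfolding lower upper \<delta>_def[symmetric] by (simp add: algebra_simps)
qed

lemma tchild_decomposed_tdelta:
  assumes "(\<alpha>, \<beta>, j) \<in> generated d eps" "decomposed d eps (\<alpha>, \<beta>, j)"
    and "eps < tdelta d eps (\<alpha>, \<beta>, j) * W d \<alpha> \<beta>" "j \<le> i" "i \<le> d"
  shows "decomposed d eps (tchild d eps (\<alpha>, \<beta>, j) i)"
    and "tdelta d eps (tchild d eps (\<alpha>, \<beta>, j) i) = tg d eps (tdelta d eps (\<alpha>, \<beta>, j)) (W d \<alpha> \<beta>) i"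
proof -
  define \<delta> where "\<delta> = tdelta d eps (\<alpha>, \<beta>, j)"
  define D where "D = (\<Prod>l=1..<j. \<alpha> l) * (\<Prod>l=j..d. \<beta> l)"
  have adm: "admissible_box d (\<alpha>, \<beta>, j)" using generated_admissible_box[OF assms(1)] .
  obtain a b k where child: "tchild d eps (\<alpha>, \<beta>, j) i = (a, b, k)"
    by (metis prod_cases3)
  then have "k = i" using assms(4,5) by (simp add: tchild_def)
  have "(a, b, i) \<in> generated d eps"
    using generated.step[OF assms(1,2) refl assms(4)] assms(5) child \<open>k = i\<close> by simp
  then have "W d a b = (\<Prod>l=1..d. b l)"
    using W_admissible_box[OF generated_admissible_box] assms(5) by blast
  then have weight: "W d a b = \<delta> * W d \<alpha> \<beta>"
    using tchild_upper_prod[OF adm assms(4,5) child] by (simp add: \<delta>_def)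
  show "decomposed d eps (tchild d eps (\<alpha>, \<beta>, j) i)"
    using child \<open>k = i\<close> weight assms(3,5) by (simp add: decomposed_def \<delta>_def)
  have "eps < W d \<alpha> \<beta>" using assms(2) by (simp add: decomposed_def)
  have \<delta>_pos: "0 < \<delta>" and \<delta>_power: "\<delta> ^ (d - j + 1) * D = W d \<alpha> \<beta> - eps"
    using tdelta_pos_power[OF adm assms(2)] by (simp_all add: \<delta>_def D_def)
  have "(\<delta> ^ (i - j + 1) * D) * \<delta> ^ (d - i) = \<delta> ^ (i - j + 1 + (d - i)) * D"
    by (simp add: power_add)
  also have "i - j + 1 + (d - i) = d - j + 1"
    using assms(4,5) by simp
  also note \<delta>_power
  finally have "((\<delta> * W d \<alpha> \<beta> - eps) / (\<delta> ^ (i - j + 1) * D)) powr (1 / real (d - i + 1))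
      = tg d eps \<delta> (W d \<alpha> \<beta>) i"
    using assms(3) by (intro tg_as_root[OF \<delta>_pos \<open>eps < W d \<alpha> \<beta>\<close>]) (simp_all add: \<delta>_def)
  moreover have "tdelta d eps (a, b, i)
      = ((\<delta> * W d \<alpha> \<beta> - eps) / (\<delta> ^ (i - j + 1) * D)) powr (1 / real (d - i + 1))"
    using tchild_denominator[OF adm assms(4,5) child] tchild_upper_prod[OF adm assms(4,5) child]
    by (simp add: tdelta_def \<delta>_def D_def)
  ultimately show "tdelta d eps (tchild d eps (\<alpha>, \<beta>, j) i) = tg d eps \<delta> (W d \<alpha> \<beta>) i"
    using child \<open>k = i\<close> by simp
qed

theorem mainTheorem1:
  fixes d :: nat and eps :: real
  assumes eps: "0 < eps" "eps < 1"
  shows "(\<forall>\<alpha> \<beta> j. (\<alpha>, \<beta>, j) \<in> generated d eps \<longrightarrow> 1 \<le> j \<longrightarrow> decomposed d eps (\<alpha>, \<beta>, j)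
           \<longrightarrow> tdelta d eps (\<alpha>, \<beta>, j) * W d \<alpha> \<beta> > eps
           \<longrightarrow> (\<forall>i\<in>{j..d}. decomposed d eps (tchild d eps (\<alpha>, \<beta>, j) i)
                 \<and> tdelta d eps (tchild d eps (\<alpha>, \<beta>, j) i)
                   = tg d eps (tdelta d eps (\<alpha>, \<beta>, j)) (W d \<alpha> \<beta>) i))
      \<and> (\<forall>\<delta>1 \<delta>2 w i. 0 < \<delta>1 \<longrightarrow> \<delta>1 < \<delta>2 \<longrightarrow> \<delta>2 < 1 \<longrightarrow> w > eps / \<delta>1 \<longrightarrow> i \<in> {1..d}
           \<longrightarrow> tg d eps \<delta>1 w i < tg d eps \<delta>2 w i)
      \<and> (\<forall>\<delta> w1 w2 i. 0 < \<delta> \<longrightarrow> \<delta> < 1 \<longrightarrow> eps / \<delta> < w1 \<longrightarrow> w1 < w2 \<longrightarrow> i \<in> {1..d}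
           \<longrightarrow> tg d eps \<delta> w1 i < tg d eps \<delta> w2 i)
      \<and> (\<forall>\<delta> w i1 i2. 0 < \<delta> \<longrightarrow> \<delta> < 1 \<longrightarrow> eps / \<delta> < w \<longrightarrow> 1 \<le> i1 \<longrightarrow> i1 < i2 \<longrightarrow> i2 \<le> d
           \<longrightarrow> tg d eps \<delta> w i2 < tg d eps \<delta> w i1)"
proof (intro conjI allI impI ballI)
  fix \<alpha> \<beta> j i
  assume "(\<alpha>, \<beta>, j) \<in> generated d eps" "decomposed d eps (\<alpha>, \<beta>, j)"
    "tdelta d eps (\<alpha>, \<beta>, j) * W d \<alpha> \<beta> > eps" "i \<in> {j..d}"
  then show "decomposed d eps (tchild d eps (\<alpha>, \<beta>, j) i)"
    "tdelta d eps (tchild d eps (\<alpha>, \<beta>, j) i) = tg d eps (tdelta d eps (\<alpha>, \<beta>, j)) (W d \<alpha> \<beta>) i"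
    using tchild_decomposed_tdelta by auto
qed (use eps tg_strict_mono_delta tg_strict_mono_weight tg_strict_antimono_index in auto)

end
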